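(* Let $N=2m+1$ be an odd integer with $N\ge3$. There exist $\varphi,\psi\in\mathbb{C}^N$ such that there is no $c\in\mathbb{C}$ with $|c|=1$ and $\psi=c\varphi$, while for all $k=0,\ldots,2N-3$, $$\Big|P_\varphi\Big(\tfrac{k}{2N-2}\Big)\Big|=\Big|P_\psi\Big(\tfrac{k}{2N-2}\Big)\Big|$$ and $$\Big|P_\varphi\Big(\tfrac{k}{2N-2}\Big)-P_\varphi\Big(\tfrac{k-1}{2N-2}\Big)\Big|=\Big|P_\psi\Big(\tfrac{k}{2N-2}\Big)-P_\psi\Big(\tfrac{k-1}{2N-2}\Big)\Big|.$$
   Context: For $\psi=(\psi_0,\ldots,\psi_{N-1})\in\mathbb{C}^N$, $P_\psi(x)=\sum_{j=0}^{N-1}\psi_je^{2i\pi jx}$ for $x\in\mathbb{R}$ (a $1$-periodic function). *)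

theory Defs
  imports "HOL-Analysis.Analysis"
begin

text \<open>Trigonometric polynomial of a vector psi in C^N, represented as a function
  nat => complex whose entries with index < N are the coordinates.\<close>
definition P :: "nat \<Rightarrow> (nat \<Rightarrow> complex) \<Rightarrow> real \<Rightarrow> complex" where
  "P N psi x = (\<Sum>j<N. psi j * exp (2 * \<i> * of_real pi * of_nat j * of_real x))"

end

theory Submission
  imports Defs
begin

text \<open>Take phi = e_0 + i e_(N-1) and psi = e_0 - i e_(N-1). They are not unimodular multiples of
  each other, yet P_phi(x) = 1 + i exp(2 pi i (N-1) x), and at every grid point x = r/(2N-2) the
  exponential equals (-1)^r, which is real; hence P_psi = cnj P_phi on the whole grid, and
  conjugation preserves the moduli of values and of differences.\<close>

lemma cnj_exp_i_pi_int [simp]: "cnj (exp (\<i> * of_real pi * of_int r)) = exp (\<i> * of_real pi * of_int r)"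
proof -
  have "exp (\<i> * of_real pi * of_int r) = complex_of_real (cos (pi * of_int r))"
    using Euler[of "\<i> * of_real pi * of_int r"] sin_npi_int[of r] by (simp add: mult.commute)
  then show ?thesis by simp
qed

lemma P_unit_plus_monomial:
  assumes "0 < n" "n < N"
  shows "P N (\<lambda>j. (if j = 0 then 1 else 0) + (if j = n then a else 0)) x
       = 1 + a * exp (2 * \<i> * of_real pi * of_nat n * of_real x)"
proof -
  have "P N (\<lambda>j. (if j = 0 then 1 else 0) + (if j = n then a else 0)) x
    = (\<Sum>j<N. if j = 0 then 1 else 0)
    + (\<Sum>j<N. if j = n then a * exp (2 * \<i> * of_real pi * of_nat j * of_real x) else 0)"
    unfolding P_def sum.distrib[symmetric] by (rule sum.cong) (use assms in auto)
  then show ?thesis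
    using assms by simp
qed

lemma exp_monomial_at_half_grid:
  assumes "0 < n"
  shows "exp (2 * \<i> * of_real pi * of_nat n * of_real (of_int r / real (2 * n)))
       = exp (\<i> * of_real pi * of_int r)"
  using assms by (simp add: field_simps)

lemma P_conj_at_half_grid:
  assumes "0 < n" "n < N"
  shows "P N (\<lambda>j. (if j = 0 then 1 else 0) + (if j = n then cnj a else 0)) (of_int r / real (2 * n))
       = cnj (P N (\<lambda>j. (if j = 0 then 1 else 0) + (if j = n then a else 0)) (of_int r / real (2 * n)))"
  unfolding P_unit_plus_monomial[OF assms] exp_monomial_at_half_grid[OF assms(1)] by simp

theorem mainTheorem15:
  fixes N m :: nat
  assumes "N = 2 * m + 1" and "N \<ge> 3"
  shows "\<exists>phi psi :: nat \<Rightarrow> complex.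
    (\<not> (\<exists>c::complex. norm c = 1 \<and> (\<forall>j<N. psi j = c * phi j))) \<and>
    (\<forall>k::nat. k \<le> 2 * N - 3 \<longrightarrow>
       norm (P N phi (real k / real (2 * N - 2))) = norm (P N psi (real k / real (2 * N - 2))) \<and>
       norm (P N phi (real k / real (2 * N - 2)) - P N phi ((real k - 1) / real (2 * N - 2)))
       = norm (P N psi (real k / real (2 * N - 2)) - P N psi ((real k - 1) / real (2 * N - 2))))"
proof (intro exI conjI allI impI)
  let ?phi = "\<lambda>j. (if j = 0 then 1 else 0) + (if j = N - 1 then \<i> else 0) :: complex"
  let ?psi = "\<lambda>j. (if j = 0 then 1 else 0) + (if j = N - 1 then cnj \<i> else 0) :: complex"
  have n: "0 < N - 1" "N - 1 < N" and grid: "2 * N - 2 = 2 * (N - 1)"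
    using assms(2) by auto
  show "\<not> (\<exists>c. norm c = 1 \<and> (\<forall>j<N. ?psi j = c * ?phi j))"
  proof
    assume "\<exists>c. norm c = 1 \<and> (\<forall>j<N. ?psi j = c * ?phi j)"
    then obtain c where "\<forall>j<N. ?psi j = c * ?phi j" by blast
    then have "?psi 0 = c * ?phi 0" "?psi (N - 1) = c * ?phi (N - 1)"
      using n by blast+
    then have "c = 1" "- \<i> = c * \<i>"
      using n by simp_all
    then show False
      by (simp add: complex_eq_iff)
  qed
  fix k :: nat
  have conj: "P N ?psi (of_int r / real (2 * N - 2)) = cnj (P N ?phi (of_int r / real (2 * N - 2)))"
    for r
    unfolding grid by (rule P_conj_at_half_grid[OF n])
  show "norm (P N ?phi (real k / real (2 * N - 2))) = norm (P N ?psi (real k / real (2 * N - 2)))"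
    using conj[of "int k"] by simp
  show "norm (P N ?phi (real k / real (2 * N - 2)) - P N ?phi ((real k - 1) / real (2 * N - 2)))
      = norm (P N ?psi (real k / real (2 * N - 2)) - P N ?psi ((real k - 1) / real (2 * N - 2)))"
    using conj[of "int k"] conj[of "int k - 1"] by (simp flip: complex_cnj_diff)
qed

end
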